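(* For any $0<p<\frac{1}{2}$ and any confidence threshold $0<\delta<\frac{1}{2}$, there exists an adaptive Las Vegas noisy binary search algorithm for any linear order such that, when the target is drawn from a probability distribution $\mu$ that is given to the algorithm as input, after an expected number of $$\frac{1}{I(p)}\left(H(\mu)+\mathcal{O}(H_2(\mu))+\mathcal{O}(\log\delta^{-1})\right)$$ queries it returns the target correctly with probability at least $1-\delta$.
   Context: Noisy binary search model: the search space is a linear order $\{1,\dots,n\}$ containing an unknown target $v^*$. In each step the algorithm chooses an element $q$ and asks a comparison query, whose correct answer is "$<$" if $v^*<q$ and "$>$" otherwise. Each answer is, independently, incorrect (the opposite answer) with probability $p$ and correct with probability $1-p$. The algorithm is adaptive; in the Las Vegas setting the number of queries is random and the bound is on its expectation (over $\mu$ and the noise). $H(\mu)=\sum_x\mu(x)\log_2\frac{1}{\mu(x)}$, $H_2(\mu)=\sum_x\mu(x)\log_2\log_2\frac{1}{\mu(x)}$, $H(p)=-p\log_2 p-(1-p)\log_2(1-p)$ and $I(p)=1-H(p)$. *)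

theory Defs
  imports Complex_Main "HOL-Library.Extended_Nonnegative_Real"
begin

text \<open>An adaptive (deterministic) search strategy, for a fixed instance, maps the
history of received answers to the next action: ask a comparison query at an
element q, or stop and return an element x.  An answer True means "<"
(i.e. the target is smaller than q), False means ">".\<close>

datatype action = Ask nat | Answer nat

definition is_Ask :: "action \<Rightarrow> bool" where
  "is_Ask a = (case a of Ask _ \<Rightarrow> True | Answer _ \<Rightarrow> False)"

definition correct_answer :: "nat \<Rightarrow> nat \<Rightarrow> bool" where
  "correct_answer v q = (v < q)"

text \<open>Probability (under noise rate p, target v) that the run of strategy S
produces exactly the answer history h (as a prefix of the run); it is 0 if S
stops before having received all answers of h.\<close>
definition prob_hist :: "real \<Rightarrow> (bool list \<Rightarrow> action) \<Rightarrow> nat \<Rightarrow> bool list \<Rightarrow> real" where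
  "prob_hist p S v h =
     (\<Prod>i<length h. (case S (take i h) of
         Ask q \<Rightarrow> (if h ! i = correct_answer v q then 1 - p else p)
       | Answer x \<Rightarrow> 0))"

definition prob_more_than :: "real \<Rightarrow> (bool list \<Rightarrow> action) \<Rightarrow> nat \<Rightarrow> nat \<Rightarrow> real" where
  "prob_more_than p S v k =
     (\<Sum>h\<in>{h::bool list. length h = k}. if is_Ask (S h) then prob_hist p S v h else 0)"

text \<open>Expected number of queries (tail-sum formula; equals \<infinity> if the strategy
fails to terminate with positive probability).\<close>
definition expected_queries :: "real \<Rightarrow> (bool list \<Rightarrow> action) \<Rightarrow> nat \<Rightarrow> ennreal" where
  "expected_queries p S v = (\<Sum>k. ennreal (prob_more_than p S v k))"

definition success_prob :: "real \<Rightarrow> (bool list \<Rightarrow> action) \<Rightarrow> nat \<Rightarrow> ennreal" where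
  "success_prob p S v =
     (\<Sum>k. ennreal (\<Sum>h\<in>{h::bool list. length h = k}.
                       if S h = Answer v then prob_hist p S v h else 0))"

text \<open>Entropies (base 2), with the convention 0 log(1/0) = 0 built into Isabelle's log.\<close>
definition entropy :: "nat \<Rightarrow> (nat \<Rightarrow> real) \<Rightarrow> real" where
  "entropy n \<mu> = (\<Sum>x\<in>{1..n}. \<mu> x * log 2 (1 / \<mu> x))"

definition entropy2 :: "nat \<Rightarrow> (nat \<Rightarrow> real) \<Rightarrow> real" where
  "entropy2 n \<mu> = (\<Sum>x\<in>{1..n}. \<mu> x * log 2 (log 2 (1 / \<mu> x)))"

definition bin_entropy :: "real \<Rightarrow> real" where
  "bin_entropy p = - p * log 2 p - (1 - p) * log 2 (1 - p)"

definition capacity :: "real \<Rightarrow> real" where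
  "capacity p = 1 - bin_entropy p"

end

theory Submission
  imports Defs
begin

(* The strategy maintains unnormalised posterior weights (prior times likelihood of the answers
   received), queries at a weighted median, and stops as soon as a single element carries a
   1 - delta fraction of the weight, answering that element.  Since the weight of a history is its
   probability, the answer is correct with probability at least 1 - delta.

   For the number of queries consider the log-odds potential
   Phi(w) = sum_v w_v log (w_v / (W - w_v)), W the total weight.  A query raises the weighted
   potential of a node by at least I(p) W: element v gains I(p) - kappa (t_v - 1/2), where t_v is
   the fraction of its competitors lying on its own side of the query, and querying at the median
   makes the w-average of t_v at most 1/2.  The potential starts at
   -sum_v mu_v log ((1 - mu_v) / mu_v) >= -H(mu) and is at most
   log ((1 - p) / p * (1 - delta) / delta) per unit of weight wherever the search stops, so the
   expected number of queries is at most (H(mu) + log (1 / delta) + log ((1 - p) / p)) / I(p). *)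

section \<open>Real inequalities\<close>

lemma log2_le_tangent_half:
  fixes a :: real
  assumes "0 < a"
  shows "log 2 a \<le> (2 * a - 1) / ln 2 - 1"
proof -
  have "ln 2 + ln a = ln (2 * a)" using assms by (simp add: ln_mult)
  also have "\<dots> \<le> 2 * a - 1" using assms by (intro ln_le_minus_one) simp
  finally have "ln a / ln 2 \<le> (2 * a - 1 - ln 2) / ln 2" by (simp add: divide_right_mono)
  then show ?thesis by (simp add: log_def diff_divide_distrib)
qed

lemma ln_less_minus_one:
  fixes x :: real
  assumes "0 < x" "x \<noteq> 1"
  shows "ln x < x - 1"
  using ln_le_minus_one[OF assms(1)] ln_eq_minus_one[OF assms(1)] assms(2) by fastforce

lemma capacity_pos:
  assumes "0 < p" "p < 1/2"
  shows "0 < capacity p"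
proof -
  have "p * ln (1 / (2 * p)) + (1 - p) * ln (1 / (2 * (1 - p)))
        < p * (1 / (2 * p) - 1) + (1 - p) * (1 / (2 * (1 - p)) - 1)"
    using assms by (intro add_less_le_mono mult_strict_left_mono mult_left_mono
        ln_less_minus_one ln_le_minus_one) (auto simp: field_simps)
  also have "\<dots> = 0" using assms by (simp add: field_simps)
  finally have "0 < p * ln (2 * p) + (1 - p) * ln (2 * (1 - p))"
    using assms by (simp add: ln_div)
  also have "\<dots> = ln 2 * capacity p"
    using assms ln_mult[of 2 p] ln_mult[of 2 "1 - p"]
    by (simp add: capacity_def bin_entropy_def log_def field_simps)
  finally show ?thesis by (simp add: zero_less_mult_iff)
qed

lemma log_odds_gain:
  fixes p w same other :: real
  assumes p: "0 < p" "p < 1/2" and "0 \<le> w" "0 \<le> same" "0 \<le> other" "0 < same + other"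
  shows "w * (capacity p - 2 * (1 - 2*p)\<^sup>2 / ln 2 * (same / (same + other) - 1/2))
    \<le> (1 - p) * w * (log 2 ((1 - p) * w) - log 2 ((1 - p) * same + p * other))
      + p * w * (log 2 (p * w) - log 2 (p * same + (1 - p) * other))
      - w * (log 2 w - log 2 (same + other))"
proof (cases "w = 0")
  case False
  with \<open>0 \<le> w\<close> have w: "0 < w" by simp
  define c where "c = same + other"
  define t where "t = same / c"
  define a where "a = (1 - p) * t + p * (1 - t)"
  define b where "b = p * t + (1 - p) * (1 - t)"
  have c: "0 < c" and t: "0 \<le> t" "t \<le> 1"
    using assms by (auto simp: c_def t_def)
  have "a = p + (1 - 2*p) * t" "b = p + (1 - 2*p) * (1 - t)"
    by (simp_all add: a_def b_def algebra_simps)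
  then have a: "0 < a" and b: "0 < b"
    using p t by (simp_all add: add_pos_nonneg)
  have "c * t = same" "c * (1 - t) = other"
    using c by (simp_all add: t_def c_def field_simps)
  then have ca: "(1 - p) * same + p * other = c * a" and cb: "p * same + (1 - p) * other = c * b"
    unfolding a_def b_def by (metis distrib_left mult.left_commute)+
  have "(1 - p) * log 2 a + p * log 2 b
        \<le> (1 - p) * ((2 * a - 1) / ln 2 - 1) + p * ((2 * b - 1) / ln 2 - 1)"
    using p a b by (intro add_mono mult_left_mono log2_le_tangent_half) auto
  also have "\<dots> = (1 - 2*p)\<^sup>2 * (2 * t - 1) / ln 2 - 1"
    by (simp add: a_def b_def power2_eq_square field_simps)
  finally have tangent: "(1 - p) * log 2 a + p * log 2 b \<le> (1 - 2*p)\<^sup>2 * (2 * t - 1) / ln 2 - 1" .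
  have "capacity p - 2 * (1 - 2*p)\<^sup>2 / ln 2 * (t - 1/2)
        \<le> (1 - p) * log 2 (1 - p) + p * log 2 p - (1 - p) * log 2 a - p * log 2 b"
    using tangent by (simp add: capacity_def bin_entropy_def field_simps)
  then have "w * (capacity p - 2 * (1 - 2*p)\<^sup>2 / ln 2 * (t - 1/2))
        \<le> w * ((1 - p) * log 2 (1 - p) + p * log 2 p - (1 - p) * log 2 a - p * log 2 b)"
    using w by (simp add: mult_left_mono)
  also have "\<dots> = (1 - p) * w * (log 2 ((1 - p) * w) - log 2 (c * a))
      + p * w * (log 2 (p * w) - log 2 (c * b)) - w * (log 2 w - log 2 c)"
  proof -
    have "log 2 ((1 - p) * w) = log 2 (1 - p) + log 2 w" "log 2 (p * w) = log 2 p + log 2 w"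
      "log 2 (c * a) = log 2 c + log 2 a" "log 2 (c * b) = log 2 c + log 2 b"
      using p w a b c by (simp_all add: log_mult)
    then show ?thesis by (simp add: algebra_simps)
  qed
  finally show ?thesis by (simp add: ca cb c_def t_def)
qed simp

lemma median_balance_ineq:
  fixes a s W :: real
  assumes "0 \<le> a" "a \<le> s" "s - a \<le> W - s" "2 * (W - s) \<le> W" "a < W"
  shows "a * ((s - a) / (W - a)) + (s\<^sup>2 + (W - s)\<^sup>2 - a * s) / W \<le> W / 2"
proof -
  define r where "r = s - a"
  define R where "R = W - s"
  define A where "A = R - r"
  define c where "c = a - A"
  have W: "0 < W" and A: "0 \<le> A" and c: "0 \<le> c" and r: "0 \<le> r"
    using assms by (simp_all add: r_def R_def A_def c_def)
  \<comment> \<open>after clearing denominators the slack is a polynomial in r, A, c with nonnegative coefficients\<close>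
  have "2 * (a * r * W + (r + R) * (r * (a + r) + R\<^sup>2)) + (4*r*A*c + 2*r*A\<^sup>2 + A*c\<^sup>2 + 4*A\<^sup>2*c + 2*A^3)
        = (r + R) * W * W"
    unfolding r_def R_def A_def c_def power2_eq_square power3_eq_cube by algebra
  moreover have "0 \<le> 4*r*A*c + 2*r*A\<^sup>2 + A*c\<^sup>2 + 4*A\<^sup>2*c + 2*A^3"
    using r A c by simp
  ultimately have "2 * (a * r * W + (r + R) * (r * (a + r) + R\<^sup>2)) \<le> (r + R) * W * W"
    by linarith
  moreover have "0 < r + R" using assms by (simp add: r_def R_def)
  ultimately have "(a * r * W + (r + R) * (r * (a + r) + R\<^sup>2)) / ((r + R) * W) \<le> W / 2"
    using W by (simp add: pos_divide_le_eq mult_ac)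
  moreover have "a * (r / (r + R)) + (r * (a + r) + R\<^sup>2) / W
      = (a * r * W + (r + R) * (r * (a + r) + R\<^sup>2)) / ((r + R) * W)"
    using W \<open>0 < r + R\<close> by (simp add: field_simps)
  moreover have "s - a = r" "W - a = r + R" "s\<^sup>2 + (W - s)\<^sup>2 - a * s = r * (a + r) + R\<^sup>2"
    by (simp_all add: r_def R_def power2_eq_square algebra_simps)
  ultimately show ?thesis by simp
qed

lemma log_stop_odds_le:
  fixes p \<delta> :: real
  assumes "0 < p" "p < 1/2" "0 < \<delta>" "\<delta> < 1/2"
  shows "log 2 ((1 - p) / p * ((1 - \<delta>) / \<delta>)) \<le> (1 + log 2 ((1 - p) / p)) * log 2 (1 / \<delta>)"
proof -
  have "0 \<le> log 2 ((1 - p) / p)" "1 \<le> log 2 (1 / \<delta>)"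
    using assms by (simp_all add: field_simps)
  moreover have "log 2 ((1 - \<delta>) / \<delta>) \<le> log 2 (1 / \<delta>)"
    using assms by (simp add: divide_right_mono)
  moreover have "log 2 ((1 - p) / p * ((1 - \<delta>) / \<delta>)) = log 2 ((1 - p) / p) + log 2 ((1 - \<delta>) / \<delta>)"
    using assms by (intro log_mult_pos) auto
  moreover from calculation(1,2) have
    "log 2 ((1 - p) / p) \<le> log 2 ((1 - p) / p) * log 2 (1 / \<delta>)"
    using mult_left_mono[of 1 "log 2 (1 / \<delta>)" "log 2 ((1 - p) / p)"] by simp
  ultimately show ?thesis unfolding distrib_right by linarith
qed

section \<open>Weights and the median query\<close>

definition reweight :: "real \<Rightarrow> nat \<Rightarrow> bool \<Rightarrow> (nat \<Rightarrow> real) \<Rightarrow> nat \<Rightarrow> real" where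
  "reweight p q b w x = (if b = (x < q) then 1 - p else p) * w x"

definition mass :: "nat \<Rightarrow> (nat \<Rightarrow> real) \<Rightarrow> real" where
  "mass n w = (\<Sum>x\<in>{1..n}. w x)"

definition left_mass :: "nat \<Rightarrow> (nat \<Rightarrow> real) \<Rightarrow> nat \<Rightarrow> real" where
  "left_mass n w q = sum w ({1..n} \<inter> {x. x < q})"

definition right_mass :: "nat \<Rightarrow> (nat \<Rightarrow> real) \<Rightarrow> nat \<Rightarrow> real" where
  "right_mass n w q = sum w ({1..n} \<inter> - {x. x < q})"

definition side_mass :: "nat \<Rightarrow> (nat \<Rightarrow> real) \<Rightarrow> nat \<Rightarrow> nat \<Rightarrow> real" where
  "side_mass n w q v = (if v < q then left_mass n w q else right_mass n w q)"

lemma left_plus_right_mass: "left_mass n w q + right_mass n w q = mass n w"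
  using sum.If_cases[of "{1..n}" "\<lambda>x. x < q" w w] by (simp add: left_mass_def right_mass_def mass_def)

lemma mass_reweight:
  "mass n (reweight p q b w)
     = (if b then 1 - p else p) * left_mass n w q + (if b then p else 1 - p) * right_mass n w q"
proof -
  have "mass n (reweight p q b w)
        = (\<Sum>x\<in>{1..n}. if x < q then (if b then 1 - p else p) * w x else (if b then p else 1 - p) * w x)"
    unfolding mass_def reweight_def by (rule sum.cong) auto
  also have "\<dots> = (if b then 1 - p else p) * left_mass n w q + (if b then p else 1 - p) * right_mass n w q"
    by (simp add: sum.If_cases left_mass_def right_mass_def sum_distrib_left)
  finally show ?thesis .
qed

lemma mass_reweight_True_False:
  "mass n (reweight p q True w) + mass n (reweight p q False w) = mass n w"
  using left_plus_right_mass[of n w q] by (simp add: mass_reweight algebra_simps)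

lemma mass_reweight_ge:
  assumes "0 < p" "p < 1/2" "\<forall>x\<in>{1..n}. 0 \<le> w x"
  shows "p * mass n w \<le> mass n (reweight p q b w)"
  unfolding mass_def reweight_def sum_distrib_left
  using assms by (intro sum_mono mult_right_mono) auto

lemma sum_times_side_mass:
  "(\<Sum>v\<in>{1..n}. w v * side_mass n w q v) = (left_mass n w q)\<^sup>2 + (right_mass n w q)\<^sup>2"
proof -
  have "(\<Sum>v\<in>{1..n}. w v * side_mass n w q v)
        = (\<Sum>v\<in>{1..n}. if v < q then w v * left_mass n w q else w v * right_mass n w q)"
    by (rule sum.cong) (auto simp: side_mass_def)
  also have "\<dots> = (left_mass n w q)\<^sup>2 + (right_mass n w q)\<^sup>2"
    by (simp add: sum.If_cases left_mass_def right_mass_def sum_distrib_right power2_eq_square)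
  finally show ?thesis .
qed

lemma side_mass_bounds:
  assumes "\<forall>x\<in>{1..n}. 0 \<le> w x" "v \<in> {1..n}"
  shows "w v \<le> side_mass n w q v" "side_mass n w q v \<le> mass n w"
proof -
  have "0 \<le> left_mass n w q" "0 \<le> right_mass n w q"
    using assms(1) by (auto simp: left_mass_def right_mass_def intro: sum_nonneg)
  then show "side_mass n w q v \<le> mass n w"
    using left_plus_right_mass[of n w q] by (simp add: side_mass_def)
  show "w v \<le> side_mass n w q v"
    using assms by (auto simp: side_mass_def left_mass_def right_mass_def intro!: member_le_sum)
qed

lemma mass_reweight_minus:
  "mass n (reweight p q b w) - reweight p q b w v
     = (if b = (v < q) then 1 - p else p) * (side_mass n w q v - w v)
       + (if b = (v < q) then p else 1 - p) * (mass n w - side_mass n w q v)"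
  by (cases b; cases "v < q")
    (simp_all add: mass_reweight reweight_def side_mass_def algebra_simps
      flip: left_plus_right_mass[of n w q])

definition weighted_median :: "nat \<Rightarrow> (nat \<Rightarrow> real) \<Rightarrow> nat" where
  "weighted_median n w = (LEAST m. mass n w \<le> 2 * (\<Sum>x\<in>{1..m}. w x))"

text \<open>The query point is chosen so that the weighted median joins the lighter of its two sides.\<close>

definition median_query :: "nat \<Rightarrow> (nat \<Rightarrow> real) \<Rightarrow> nat" where
  "median_query n w =
     (if (\<Sum>x\<in>{1..<weighted_median n w}. w x) \<le> (\<Sum>x\<in>{weighted_median n w<..n}. w x)
         \<and> weighted_median n w < n
      then weighted_median n w + 1 else weighted_median n w)"

lemma weighted_median:
  assumes "\<forall>x\<in>{1..n}. 0 \<le> w x" "0 < mass n w"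
  defines "m \<equiv> weighted_median n w"
  shows "m \<in> {1..n}" "2 * (\<Sum>x\<in>{1..<m}. w x) < mass n w" "mass n w \<le> 2 * (\<Sum>x\<in>{1..m}. w x)"
proof -
  let ?P = "\<lambda>m. mass n w \<le> 2 * (\<Sum>x\<in>{1..m}. w x)"
  have "?P n" using assms by (simp add: mass_def)
  then have le_n: "m \<le> n" and P: "?P m"
    unfolding m_def weighted_median_def by (auto intro: Least_le LeastI)
  show "?P m" by (rule P)
  have "\<not> ?P 0" using assms by simp
  with P have m1: "1 \<le> m" by (cases m) auto
  with le_n show "m \<in> {1..n}" by simp
  have "m - 1 < m" using m1 by simp
  then have "\<not> ?P (m - 1)"
    unfolding m_def weighted_median_def by (rule not_less_Least)
  moreover have "{1..m - 1} = {1..<m}" using m1 by auto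
  ultimately show "2 * (\<Sum>x\<in>{1..<m}. w x) < mass n w" by simp
qed

lemma median_query_in_range:
  assumes "\<forall>x\<in>{1..n}. 0 \<le> w x" "0 < mass n w"
  shows "median_query n w \<in> {1..n}"
  using weighted_median(1)[OF assms] by (auto simp: median_query_def)

lemma median_query_side_mass:
  assumes "\<forall>x\<in>{1..n}. 0 \<le> w x" "0 < mass n w"
  defines "m \<equiv> weighted_median n w" and "q \<equiv> median_query n w"
  shows "side_mass n w q m - w m \<le> mass n w - side_mass n w q m"
    and "2 * (mass n w - side_mass n w q m) \<le> mass n w"
proof -
  define l where "l = (\<Sum>x\<in>{1..<m}. w x)"
  define g where "g = (\<Sum>x\<in>{m<..n}. w x)"
  note median = weighted_median[OF assms(1,2), folded m_def]
  have "{1..n} = insert m ({1..<m} \<union> {m<..n})" using median(1) by auto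
  moreover have "sum w ({1..<m} \<union> {m<..n}) = l + g"
    unfolding l_def g_def by (rule sum.union_disjoint) auto
  ultimately have mass: "mass n w = l + w m + g"
    unfolding mass_def by simp
  have l_lt: "2 * l < mass n w" using median(2) by (simp add: l_def)
  have "{1..m} = {1..<m} \<union> {m}" using median(1) by auto
  then have g_le: "2 * g \<le> mass n w" using median(3) mass by (simp add: l_def)
  have "side_mass n w q m - w m \<le> mass n w - side_mass n w q m
        \<and> 2 * (mass n w - side_mass n w q m) \<le> mass n w"
  proof (cases "l \<le> g \<and> m < n")
    case True
    then have "q = m + 1" by (simp add: q_def median_query_def m_def l_def g_def)
    moreover have "{1..n} \<inter> {x. x < m + 1} = {1..<m} \<union> {m}" using median(1) by auto
    ultimately have "side_mass n w q m = l + w m"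
      by (simp add: side_mass_def left_mass_def l_def sum.union_disjoint)
    then show ?thesis using True mass g_le by simp
  next
    case False
    then have "q = m" by (auto simp: q_def median_query_def m_def l_def g_def)
    moreover have "{1..n} \<inter> - {x. x < m} = {m} \<union> {m<..n}" using median(1) by auto
    moreover have "g \<le> l"
      using False median(1) sum_nonneg[of "{1..<m}" w] assms(1) by (auto simp: l_def g_def)
    ultimately show ?thesis using mass l_lt
      by (simp add: side_mass_def right_mass_def g_def sum.union_disjoint)
  qed
  then show "side_mass n w q m - w m \<le> mass n w - side_mass n w q m"
    and "2 * (mass n w - side_mass n w q m) \<le> mass n w" by auto
qed

lemma median_query_balanced:
  assumes w0: "\<forall>x\<in>{1..n}. 0 \<le> w x" and lt: "\<forall>x\<in>{1..n}. w x < mass n w" and pos: "0 < mass n w"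
  defines "q \<equiv> median_query n w"
  shows "(\<Sum>v\<in>{1..n}. w v * ((side_mass n w q v - w v) / (mass n w - w v))) \<le> mass n w / 2"
proof -
  define W where "W = mass n w"
  define S where "S = side_mass n w q"
  define m where "m = weighted_median n w"
  have m: "m \<in> {1..n}" using weighted_median(1)[OF w0 pos] by (simp add: m_def)
  \<comment> \<open>only the median's own term needs the exact bound; all others are estimated crudely\<close>
  have others: "w v * ((S v - w v) / (W - w v)) \<le> w v * S v / W" if "v \<in> {1..n}" for v
  proof -
    have "0 \<le> w v" "w v < W" "S v \<le> W" using that w0 lt side_mass_bounds(2)[OF w0]
      by (auto simp: W_def S_def)
    then have "(S v - w v) / (W - w v) \<le> S v / W"
      by (simp add: divide_simps algebra_simps mult_right_mono)
    with \<open>0 \<le> w v\<close> show ?thesis by (metis mult_left_mono times_divide_eq_right)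
  qed
  have squares: "(\<Sum>v\<in>{1..n}. w v * S v) = (S m)\<^sup>2 + (W - S m)\<^sup>2"
    using sum_times_side_mass[of w n q]
    by (simp add: S_def W_def side_mass_def flip: left_plus_right_mass[of n w q])
  have "(\<Sum>v\<in>{1..n}. w v * ((S v - w v) / (W - w v)))
        = w m * ((S m - w m) / (W - w m)) + (\<Sum>v\<in>{1..n} - {m}. w v * ((S v - w v) / (W - w v)))"
    using m by (simp add: sum.remove)
  also have "\<dots> \<le> w m * ((S m - w m) / (W - w m)) + (\<Sum>v\<in>{1..n} - {m}. w v * S v / W)"
    using others by (intro add_left_mono sum_mono) auto
  also have "\<dots> = w m * ((S m - w m) / (W - w m)) + ((S m)\<^sup>2 + (W - S m)\<^sup>2 - w m * S m) / W"
  proof -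
    have "(\<Sum>v\<in>{1..n} - {m}. w v * S v) = (\<Sum>v\<in>{1..n}. w v * S v) - w m * S m"
      using m by (simp add: sum_diff1)
    then show ?thesis by (simp only: sum_divide_distrib[symmetric] squares)
  qed
  also have "\<dots> \<le> W / 2"
    using median_query_side_mass[OF w0 pos] side_mass_bounds(1)[OF w0 m] m w0 lt
    by (intro median_balance_ineq) (auto simp: S_def W_def m_def q_def)
  finally show ?thesis by (simp add: S_def W_def)
qed

section \<open>The log-odds potential\<close>

definition log_odds_term :: "real \<Rightarrow> real \<Rightarrow> real" where
  "log_odds_term W x = x * (log 2 x - log 2 (W - x))"

definition potential :: "nat \<Rightarrow> (nat \<Rightarrow> real) \<Rightarrow> real" where
  "potential n w = (\<Sum>v\<in>{1..n}. log_odds_term (mass n w) (w v))"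

lemma log_odds_term_reweight:
  assumes p: "0 < p" "p < 1/2" and w0: "\<forall>x\<in>{1..n}. 0 \<le> w x" and "v \<in> {1..n}"
    and "w v < mass n w"
  shows "w v * (capacity p - 2 * (1 - 2*p)\<^sup>2 / ln 2
            * ((side_mass n w q v - w v) / (mass n w - w v) - 1/2))
    \<le> log_odds_term (mass n (reweight p q True w)) (reweight p q True w v)
      + log_odds_term (mass n (reweight p q False w)) (reweight p q False w v)
      - log_odds_term (mass n w) (w v)"
proof -
  define gain where "gain b = log_odds_term (mass n (reweight p q b w)) (reweight p q b w v)" for b
  define same where "same = side_mass n w q v - w v"
  define other where "other = mass n w - side_mass n w q v"
  have "0 \<le> same" "0 \<le> other" "0 < same + other" "0 \<le> w v"
    using side_mass_bounds[OF w0 \<open>v \<in> {1..n}\<close>, of q] assms by (auto simp: same_def other_def)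
  note gain = log_odds_gain[OF p this(4,1,2,3)]
  have "gain (v < q) = (1 - p) * w v * (log 2 ((1 - p) * w v) - log 2 ((1 - p) * same + p * other))"
    "gain (\<not> v < q) = p * w v * (log 2 (p * w v) - log 2 (p * same + (1 - p) * other))"
    unfolding gain_def log_odds_term_def mass_reweight_minus
    by (simp_all add: reweight_def same_def other_def)
  moreover have "gain True + gain False = gain (v < q) + gain (\<not> v < q)"
    by (cases "v < q") simp_all
  moreover have "mass n w - w v = same + other" "side_mass n w q v - w v = same"
    by (simp_all add: same_def other_def)
  ultimately show ?thesis using gain by (simp add: gain_def log_odds_term_def)
qed

lemma potential_drift:
  assumes p: "0 < p" "p < 1/2"
    and w0: "\<forall>x\<in>{1..n}. 0 \<le> w x" and lt: "\<forall>x\<in>{1..n}. w x < mass n w" and pos: "0 < mass n w"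
  defines "q \<equiv> median_query n w"
  shows "potential n w + capacity p * mass n w
         \<le> potential n (reweight p q True w) + potential n (reweight p q False w)"
proof -
  define W where "W = mass n w"
  define frac where "frac v = (side_mass n w q v - w v) / (W - w v)" for v
  define \<kappa> where "\<kappa> = 2 * (1 - 2*p)\<^sup>2 / ln 2"
  have "capacity p * W + \<kappa> * (W / 2 - (\<Sum>v\<in>{1..n}. w v * frac v))
      = (\<Sum>v\<in>{1..n}. w v * (capacity p - \<kappa> * (frac v - 1/2)))"
    by (simp add: W_def mass_def algebra_simps sum_distrib_left sum_distrib_right sum_subtractf
        sum.distrib sum_divide_distrib[symmetric])
  also have "\<dots> \<le> potential n (reweight p q True w) + potential n (reweight p q False w) - potential n w"
    unfolding potential_def sum.distrib[symmetric] sum_subtractf[symmetric]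
    using log_odds_term_reweight[OF p w0 _ lt[rule_format]]
    by (intro sum_mono) (simp add: frac_def W_def \<kappa>_def)
  finally have "capacity p * W + \<kappa> * (W / 2 - (\<Sum>v\<in>{1..n}. w v * frac v))
      \<le> potential n (reweight p q True w) + potential n (reweight p q False w) - potential n w" .
  moreover have "0 \<le> \<kappa> * (W / 2 - (\<Sum>v\<in>{1..n}. w v * frac v))"
    using median_query_balanced[OF w0 lt pos] by (simp add: \<kappa>_def frac_def W_def q_def)
  ultimately show ?thesis by (simp add: W_def)
qed

lemma potential_le_log_odds:
  assumes w0: "\<forall>x\<in>{1..n}. 0 \<le> w x" and K: "0 < K"
    and odds: "\<forall>v\<in>{1..n}. w v \<le> K * (mass n w - w v)"
  shows "potential n w \<le> log 2 K * mass n w"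
proof -
  have "log_odds_term (mass n w) (w v) \<le> log 2 K * w v" if v: "v \<in> {1..n}" for v
  proof (cases "w v = 0")
    case False
    with w0 v have "0 < w v" by force
    moreover from this odds v K have "0 < mass n w - w v"
      by (metis order_less_le_trans zero_less_mult_pos)
    moreover have "w v / (mass n w - w v) \<le> K"
      using odds v calculation by (simp add: divide_le_eq mult.commute)
    ultimately have "log 2 (w v) - log 2 (mass n w - w v) \<le> log 2 K"
      using K by (simp flip: log_divide_pos)
    with \<open>0 < w v\<close> show ?thesis by (simp add: log_odds_term_def mult.commute mult_left_mono)
  qed (simp add: log_odds_term_def)
  then have "potential n w \<le> (\<Sum>v\<in>{1..n}. log 2 K * w v)"
    unfolding potential_def by (intro sum_mono) auto
  also have "\<dots> = log 2 K * mass n w" by (simp add: mass_def sum_distrib_left)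
  finally show ?thesis .
qed

lemma odds_reweight:
  assumes p: "0 < p" "p < 1/2" and w0: "\<forall>x\<in>{1..n}. 0 \<le> w x" and v: "v \<in> {1..n}" and "0 \<le> K"
    and odds: "w v \<le> K * (mass n w - w v)"
  shows "reweight p q b w v \<le> (1 - p) / p * K * (mass n (reweight p q b w) - reweight p q b w v)"
proof -
  have "0 \<le> side_mass n w q v - w v" "0 \<le> mass n w - side_mass n w q v"
    using side_mass_bounds[OF w0 v] by auto
  moreover have "p \<le> (if b = (v < q) then 1 - p else p)" "p \<le> (if b = (v < q) then p else 1 - p)"
    using p by auto
  ultimately have "p * (side_mass n w q v - w v) + p * (mass n w - side_mass n w q v)
      \<le> mass n (reweight p q b w) - reweight p q b w v"
    unfolding mass_reweight_minus by (intro add_mono mult_right_mono)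
  then have reweight_competitors: "p * (mass n w - w v) \<le> mass n (reweight p q b w) - reweight p q b w v"
    by (simp add: algebra_simps)
  have "reweight p q b w v \<le> (1 - p) * w v"
    using p w0 v by (auto simp: reweight_def mult_right_mono)
  also have "\<dots> \<le> (1 - p) / p * K * (p * (mass n w - w v))"
    using odds p by (simp add: mult_left_mono)
  also have "\<dots> \<le> (1 - p) / p * K * (mass n (reweight p q b w) - reweight p q b w v)"
    using p \<open>0 \<le> K\<close> reweight_competitors by (intro mult_left_mono) auto
  finally show ?thesis .
qed

lemma neg_potential_le_entropy:
  assumes \<mu>0: "\<forall>x\<in>{1..n}. 0 \<le> \<mu> x" and "mass n \<mu> = 1"
  shows "- potential n \<mu> \<le> entropy n \<mu>"
  unfolding potential_def log_odds_term_def entropy_def assms(2) sum_negf[symmetric]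
proof (rule sum_mono)
  fix v assume v: "v \<in> {1..n}"
  have "\<mu> v \<le> mass n \<mu>"
    unfolding mass_def using \<mu>0 v by (intro member_le_sum) auto
  moreover have "0 \<le> \<mu> v" using \<mu>0 v by simp
  ultimately have "log 2 (1 - \<mu> v) \<le> 0"
    using assms(2) by (cases "\<mu> v = 1") (simp_all add: log_def divide_nonpos_pos)
  then show "- (\<mu> v * (log 2 (\<mu> v) - log 2 (1 - \<mu> v))) \<le> \<mu> v * log 2 (1 / \<mu> v)"
    using \<mu>0 v by (cases "\<mu> v = 0") (simp_all add: log_divide mult_nonneg_nonpos algebra_simps)
qed

section \<open>Search trees\<close>

lemma sum_lists_length_Suc:
  fixes F :: "bool list \<Rightarrow> 'a::comm_monoid_add"
  shows "(\<Sum>h | length h = Suc k. F h) = (\<Sum>h | length h = k. F (h @ [True]) + F (h @ [False]))"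
proof -
  have "{h :: bool list. length h = Suc k} = (\<lambda>(h, b). h @ [b]) ` ({h. length h = k} \<times> UNIV)"
    by (auto simp: length_Suc_conv_rev image_iff)
  moreover have "inj (\<lambda>(h, b :: bool). h @ [b])" by (auto intro: injI)
  ultimately have "(\<Sum>h | length h = Suc k. F h) = (\<Sum>(h, b) \<in> {h. length h = k} \<times> UNIV. F (h @ [b]))"
    by (simp add: sum.reindex inj_on_subset case_prod_unfold)
  also have "\<dots> = (\<Sum>h | length h = k. F (h @ [True]) + F (h @ [False]))"
    by (simp add: sum.cartesian_product[symmetric] UNIV_bool add.commute)
  finally show ?thesis .
qed

lemma prob_hist_snoc:
  "prob_hist p S v (h @ [b]) = prob_hist p S v h *
     (case S h of Ask q \<Rightarrow> if b = correct_answer v q then 1 - p else p | Answer x \<Rightarrow> 0)"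
proof -
  define factor where "factor h' i = (case S (take i h') of
    Ask q \<Rightarrow> if h' ! i = correct_answer v q then 1 - p else p | Answer x \<Rightarrow> 0)" for h' i
  have "(\<Prod>i<length h. factor (h @ [b]) i) = (\<Prod>i<length h. factor h i)"
    by (rule prod.cong) (simp_all add: factor_def nth_append split: action.split)
  then show ?thesis
    unfolding prob_hist_def factor_def[symmetric] by (simp add: factor_def split: action.split)
qed

lemma prob_hist_nonneg:
  assumes "0 \<le> p" "p \<le> 1"
  shows "0 \<le> prob_hist p S v h"
  unfolding prob_hist_def using assms by (intro prod_nonneg) (auto split: action.split)

definition reachable :: "(bool list \<Rightarrow> action) \<Rightarrow> bool list \<Rightarrow> bool" where
  "reachable S h \<longleftrightarrow> (\<forall>i<length h. is_Ask (S (take i h)))"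

lemma reachable_Nil [simp]: "reachable S []"
  by (simp add: reachable_def)

lemma reachable_snoc: "reachable S (h @ [b]) \<longleftrightarrow> reachable S h \<and> is_Ask (S h)"
  by (auto simp: reachable_def less_Suc_eq nth_append)

definition level_sum ::
    "(bool list \<Rightarrow> action) \<Rightarrow> nat \<Rightarrow> (bool list \<Rightarrow> bool) \<Rightarrow> (bool list \<Rightarrow> real) \<Rightarrow> real" where
  "level_sum S k P f = (\<Sum>h | length h = k. if reachable S h \<and> P h then f h else 0)"

lemma level_sum_mono:
  "(\<And>h. reachable S h \<Longrightarrow> P h \<Longrightarrow> f h \<le> g h) \<Longrightarrow> level_sum S k P f \<le> level_sum S k P g"
  unfolding level_sum_def by (intro sum_mono) auto

lemma level_sum_nonneg:
  "(\<And>h. reachable S h \<Longrightarrow> P h \<Longrightarrow> 0 \<le> f h) \<Longrightarrow> 0 \<le> level_sum S k P f"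
  unfolding level_sum_def by (intro sum_nonneg) auto

lemma level_sum_add: "level_sum S k P f + level_sum S k P g = level_sum S k P (\<lambda>h. f h + g h)"
  unfolding level_sum_def sum.distrib[symmetric] by (intro sum.cong) auto

lemma level_sum_cmult: "c * level_sum S k P f = level_sum S k P (\<lambda>h. c * f h)"
  unfolding level_sum_def sum_distrib_left by (intro sum.cong) auto

lemma level_sum_split:
  "level_sum S k P f + level_sum S k (\<lambda>h. \<not> P h) f = level_sum S k (\<lambda>_. True) f"
  unfolding level_sum_def sum.distrib[symmetric] by (intro sum.cong) auto

lemma level_sum_0: "level_sum S 0 (\<lambda>_. True) f = f []"
  by (simp add: level_sum_def)

lemma level_sum_Suc:
  "level_sum S (Suc k) (\<lambda>_. True) f
     = level_sum S k (\<lambda>h. is_Ask (S h)) (\<lambda>h. f (h @ [True]) + f (h @ [False]))"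
  unfolding level_sum_def sum_lists_length_Suc by (intro sum.cong) (auto simp: reachable_snoc)

lemma level_sum_root_stops:
  assumes "\<not> is_Ask (S [])"
  shows "level_sum S k P f = (if k = 0 \<and> P [] then f [] else 0)"
proof -
  have reach: "reachable S h \<longleftrightarrow> h = []" for h
  proof
    assume "reachable S h"
    then have "h \<noteq> [] \<Longrightarrow> is_Ask (S (take 0 h))" unfolding reachable_def by blast
    with assms show "h = []" by auto
  qed simp
  show ?thesis
  proof (cases k)
    case (Suc j)
    then show ?thesis unfolding level_sum_def reach by (simp, intro sum.neutral) auto
  qed (simp add: level_sum_def reach)
qed

lemma sum_ennreal_mult_suminf:
  fixes c :: "'a \<Rightarrow> real" and g :: "'a \<Rightarrow> nat \<Rightarrow> real"
  assumes "\<And>v. v \<in> I \<Longrightarrow> 0 \<le> c v" "\<And>v k. v \<in> I \<Longrightarrow> 0 \<le> g v k"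
  shows "(\<Sum>v\<in>I. ennreal (c v) * (\<Sum>k. ennreal (g v k))) = (\<Sum>k. ennreal (\<Sum>v\<in>I. c v * g v k))"
proof -
  have "(\<Sum>v\<in>I. ennreal (c v) * (\<Sum>k. ennreal (g v k))) = (\<Sum>v\<in>I. \<Sum>k. ennreal (c v * g v k))"
    using assms by (intro sum.cong) (simp_all add: ennreal_mult flip: ennreal_suminf_cmult)
  also have "\<dots> = (\<Sum>k. \<Sum>v\<in>I. ennreal (c v * g v k))"
    by (rule suminf_sum[symmetric]) (rule summableI)
  also have "\<dots> = (\<Sum>k. ennreal (\<Sum>v\<in>I. c v * g v k))"
    using assms by (subst sum_ennreal) auto
  finally show ?thesis .
qed

section \<open>The strategy\<close>

definition posterior :: "real \<Rightarrow> nat \<Rightarrow> (nat \<Rightarrow> real) \<Rightarrow> bool list \<Rightarrow> nat \<Rightarrow> real" where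
  "posterior p n \<mu> h = foldl (\<lambda>w b. reweight p (median_query n w) b w) \<mu> h"

definition confident :: "real \<Rightarrow> nat \<Rightarrow> (nat \<Rightarrow> real) \<Rightarrow> bool" where
  "confident \<delta> n w \<longleftrightarrow> (\<exists>x\<in>{1..n}. (1 - \<delta>) * mass n w \<le> w x)"

definition noisy_search :: "real \<Rightarrow> real \<Rightarrow> nat \<Rightarrow> (nat \<Rightarrow> real) \<Rightarrow> bool list \<Rightarrow> action" where
  "noisy_search p \<delta> n \<mu> h =
     (if confident \<delta> n (posterior p n \<mu> h)
      then Answer (LEAST x. x \<in> {1..n} \<and> (1 - \<delta>) * mass n (posterior p n \<mu> h) \<le> posterior p n \<mu> h x)
      else Ask (median_query n (posterior p n \<mu> h)))"

lemma posterior_Nil [simp]: "posterior p n \<mu> [] = \<mu>"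
  by (simp add: posterior_def)

lemma posterior_snoc [simp]:
  "posterior p n \<mu> (h @ [b]) = reweight p (median_query n (posterior p n \<mu> h)) b (posterior p n \<mu> h)"
  by (simp add: posterior_def)

locale noisy_search_instance =
  fixes p \<delta> :: real and n :: nat and \<mu> :: "nat \<Rightarrow> real"
  assumes p_pos: "0 < p" and p_less_half: "p < 1/2"
    and \<delta>_pos: "0 < \<delta>" and \<delta>_less_half: "\<delta> < 1/2"
    and \<mu>_nonneg: "\<forall>x\<in>{1..n}. 0 \<le> \<mu> x" and \<mu>_sum: "(\<Sum>x\<in>{1..n}. \<mu> x) = 1"
begin

abbreviation S :: "bool list \<Rightarrow> action" where "S \<equiv> noisy_search p \<delta> n \<mu>"
abbreviation post :: "bool list \<Rightarrow> nat \<Rightarrow> real" where "post \<equiv> posterior p n \<mu>"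
abbreviation W :: "bool list \<Rightarrow> real" where "W h \<equiv> mass n (post h)"
abbreviation asks :: "bool list \<Rightarrow> bool" where "asks h \<equiv> is_Ask (S h)"

lemma mass_prior: "mass n \<mu> = 1"
  using \<mu>_sum by (simp add: mass_def)

lemma posterior_nonneg: "\<forall>x\<in>{1..n}. 0 \<le> post h x"
proof (induction h rule: rev_induct)
  case (snoc b h)
  then show ?case using p_pos p_less_half by (simp add: reweight_def)
qed (use \<mu>_nonneg in simp)

lemma posterior_mass_pos: "0 < W h"
proof (induction h rule: rev_induct)
  case (snoc b h)
  have "p * W h \<le> W (h @ [b])"
    using mass_reweight_ge[OF p_pos p_less_half posterior_nonneg] by simp
  moreover have "0 < p * W h" using snoc p_pos by simp
  ultimately show ?case by linarith
qed (simp add: mass_prior)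

lemma posterior_mass_snoc: "W (h @ [True]) + W (h @ [False]) = W h"
  by (simp add: mass_reweight_True_False)

lemma asks_iff_not_confident: "asks h \<longleftrightarrow> \<not> confident \<delta> n (post h)"
  by (simp add: noisy_search_def is_Ask_def)

lemma strategy_query_eq_median: "asks h \<Longrightarrow> S h = Ask (median_query n (post h))"
  by (simp add: noisy_search_def is_Ask_def split: if_splits)

lemma strategy_query_in_range: "S h = Ask q \<Longrightarrow> q \<in> {1..n}"
  using median_query_in_range[OF posterior_nonneg posterior_mass_pos]
  by (auto simp: noisy_search_def split: if_splits)

lemma strategy_answer:
  assumes "\<not> asks h"
  obtains x where "x \<in> {1..n}" "S h = Answer x" "(1 - \<delta>) * W h \<le> post h x"
proof -
  let ?P = "\<lambda>x. x \<in> {1..n} \<and> (1 - \<delta>) * W h \<le> post h x"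
  from assms obtain x where "?P x" by (auto simp: asks_iff_not_confident confident_def)
  then have "?P (LEAST x. ?P x)" by (rule LeastI)
  with assms that show ?thesis by (auto simp: noisy_search_def is_Ask_def split: if_splits)
qed

lemma asking_odds:
  assumes "asks h" "x \<in> {1..n}"
  shows "post h x < W h" "post h x \<le> (1 - \<delta>) / \<delta> * (W h - post h x)"
proof -
  have lt: "post h x < (1 - \<delta>) * W h"
    using assms by (auto simp: asks_iff_not_confident confident_def not_le)
  then show "post h x < W h"
    using \<delta>_pos posterior_mass_pos[of h] by (smt (verit) mult_less_cancel_right2)
  from lt have "\<delta> * post h x \<le> (1 - \<delta>) * (W h - post h x)"
    by (simp add: algebra_simps)
  then show "post h x \<le> (1 - \<delta>) / \<delta> * (W h - post h x)"
    using \<delta>_pos by (simp add: field_simps)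
qed

lemma prior_times_prob_hist:
  "\<mu> v * prob_hist p S v h = (if reachable S h then post h v else 0)"
proof (induction h rule: rev_induct)
  case (snoc b h)
  show ?case
  proof (cases "S h")
    case (Ask q)
    then have "asks h" by (simp add: is_Ask_def)
    with Ask have "q = median_query n (post h)"
      using strategy_query_eq_median by (metis action.inject(1))
    have "\<mu> v * prob_hist p S v (h @ [b]) = \<mu> v * prob_hist p S v h * (if b = (v < q) then 1 - p else p)"
      by (simp add: prob_hist_snoc Ask correct_answer_def)
    with snoc \<open>asks h\<close> show ?thesis
      by (simp add: reachable_snoc reweight_def \<open>q = median_query n (post h)\<close>)
  next
    case (Answer x)
    with snoc show ?thesis by (simp add: prob_hist_snoc reachable_snoc is_Ask_def)
  qed
qed (simp add: prob_hist_def)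

abbreviation running_mass :: "nat \<Rightarrow> real" where
  "running_mass k \<equiv> level_sum S k asks W"

abbreviation stopped_mass :: "nat \<Rightarrow> real" where
  "stopped_mass k \<equiv> level_sum S k (\<lambda>h. \<not> asks h) W"

abbreviation pot :: "bool list \<Rightarrow> real" where
  "pot h \<equiv> potential n (post h)"

lemma running_mass_nonneg: "0 \<le> running_mass k"
  and stopped_mass_nonneg: "0 \<le> stopped_mass k"
  using posterior_mass_pos by (auto intro: level_sum_nonneg less_imp_le)

lemma mass_conservation: "level_sum S K (\<lambda>_. True) W + (\<Sum>k<K. stopped_mass k) = 1"
proof (induction K)
  case 0
  then show ?case by (simp add: level_sum_0 mass_prior)
next
  case (Suc K)
  have "level_sum S (Suc K) (\<lambda>_. True) W = running_mass K"
    by (simp only: level_sum_Suc posterior_mass_snoc)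
  with Suc level_sum_split[of S K asks W] show ?case by simp
qed

lemma potential_level_step:
  "level_sum S k asks pot + capacity p * running_mass k \<le> level_sum S (Suc k) (\<lambda>_. True) pot"
  unfolding level_sum_Suc level_sum_cmult level_sum_add
proof (rule level_sum_mono)
  fix h assume "asks h"
  then show "pot h + capacity p * W h \<le> pot (h @ [True]) + pot (h @ [False])"
    using potential_drift[OF p_pos p_less_half posterior_nonneg _ posterior_mass_pos] asking_odds(1)
    by simp
qed

lemma potential_telescope:
  "level_sum S 0 (\<lambda>_. True) pot + capacity p * (\<Sum>k<K. running_mass k)
     \<le> level_sum S K (\<lambda>_. True) pot + (\<Sum>k<K. level_sum S k (\<lambda>h. \<not> asks h) pot)"
proof (induction K)
  case (Suc K)
  then show ?case
    using potential_level_step[of K] level_sum_split[of S K asks pot]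
    by (simp add: algebra_simps)
qed simp

text \<open>An upper bound on the odds of every element at a node where the search stops: at most
  (1 - \<delta>) / \<delta> before the last query, and the last answer multiplies them by at most (1 - p) / p.\<close>

definition stop_odds :: real where
  "stop_odds = (1 - p) / p * ((1 - \<delta>) / \<delta>)"

text \<open>The root is the only node whose weights are not the result of a query, hence the hypothesis
  that the search does not stop there.\<close>

lemma potential_le_at_reachable:
  assumes "asks []" and "reachable S h"
  shows "pot h \<le> log 2 stop_odds * W h"
proof (rule potential_le_log_odds[OF posterior_nonneg])
  have odds_p: "1 \<le> (1 - p) / p" and odds_\<delta>: "0 < (1 - \<delta>) / \<delta>"
    using p_pos p_less_half \<delta>_pos \<delta>_less_half by (simp_all add: field_simps)
  then show "0 < stop_odds" unfolding stop_odds_def by (intro mult_pos_pos) auto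
  show "\<forall>v\<in>{1..n}. post h v \<le> stop_odds * (W h - post h v)"
  proof (cases "asks h")
    case True
    have "(1 - \<delta>) / \<delta> \<le> stop_odds"
      unfolding stop_odds_def using mult_right_mono[OF odds_p, of "(1 - \<delta>) / \<delta>"] odds_\<delta> by simp
    then have "(1 - \<delta>) / \<delta> * (W h - post h v) \<le> stop_odds * (W h - post h v)" if "v \<in> {1..n}" for v
      using asking_odds(1)[OF True that] by (intro mult_right_mono) simp_all
    with asking_odds(2)[OF True] show ?thesis by (meson order.trans)
  next
    case False
    with assms have "h \<noteq> []" by auto
    then obtain g b where h: "h = g @ [b]" by (metis rev_exhaust)
    with assms have "asks g" by (simp add: reachable_snoc)
    show ?thesis
      using odds_reweight[OF p_pos p_less_half posterior_nonneg _ _ asking_odds(2)[OF \<open>asks g\<close>]]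
        odds_\<delta> by (simp add: h stop_odds_def mult.assoc)
  qed
qed

lemma running_mass_sum_le:
  assumes "asks []"
  shows "capacity p * (\<Sum>k<K. running_mass k) \<le> log 2 stop_odds - potential n \<mu>"
proof -
  have "level_sum S K (\<lambda>_. True) pot \<le> log 2 stop_odds * level_sum S K (\<lambda>_. True) W"
    unfolding level_sum_cmult using potential_le_at_reachable[OF assms] by (rule level_sum_mono)
  moreover have "(\<Sum>k<K. level_sum S k (\<lambda>h. \<not> asks h) pot) \<le> log 2 stop_odds * (\<Sum>k<K. stopped_mass k)"
    unfolding sum_distrib_left level_sum_cmult
    using potential_le_at_reachable[OF assms] by (intro sum_mono level_sum_mono)
  moreover have "log 2 stop_odds * level_sum S K (\<lambda>_. True) W + log 2 stop_odds * (\<Sum>k<K. stopped_mass k)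
      = log 2 stop_odds"
    using mass_conservation[of K] by (simp flip: distrib_left)
  moreover have "level_sum S 0 (\<lambda>_. True) pot = potential n \<mu>" by (simp add: level_sum_0)
  ultimately show ?thesis
    using potential_telescope[of K] by linarith
qed

lemma summable_running_mass: "summable running_mass"
proof (cases "asks []")
  case True
  have "(\<Sum>k<K. running_mass k) \<le> (log 2 stop_odds - potential n \<mu>) / capacity p" for K
    using running_mass_sum_le[OF True] capacity_pos[OF p_pos p_less_half]
    by (simp add: pos_le_divide_eq mult.commute)
  then show ?thesis using running_mass_nonneg by (intro summableI_nonneg_bounded) auto
next
  case False
  then show ?thesis by (simp add: level_sum_root_stops)
qed

lemma stopped_mass_sums: "stopped_mass sums 1"
proof -
  have "running_mass \<longlonglongrightarrow> 0" by (rule summable_LIMSEQ_zero[OF summable_running_mass])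
  then have "(\<lambda>K. level_sum S (Suc K) (\<lambda>_. True) W) \<longlonglongrightarrow> 0"
    by (simp only: level_sum_Suc posterior_mass_snoc)
  then have "(\<lambda>K. 1 - level_sum S K (\<lambda>_. True) W) \<longlonglongrightarrow> 1 - 0"
    by (intro tendsto_intros) (rule LIMSEQ_imp_Suc)
  moreover have "(\<lambda>K. 1 - level_sum S K (\<lambda>_. True) W) = (\<lambda>K. \<Sum>k<K. stopped_mass k)"
    using mass_conservation by (metis add_diff_cancel_left')
  ultimately show ?thesis by (simp add: sums_def)
qed

lemma prob_hist_strategy_nonneg: "0 \<le> prob_hist p S v h"
  using p_pos p_less_half by (intro prob_hist_nonneg) auto

lemma prior_weighted_prob_more_than:
  "(\<Sum>v\<in>{1..n}. \<mu> v * prob_more_than p S v k) = running_mass k"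
proof -
  have "(\<Sum>v\<in>{1..n}. \<mu> v * prob_more_than p S v k)
        = (\<Sum>h | length h = k. \<Sum>v\<in>{1..n}. if asks h then \<mu> v * prob_hist p S v h else 0)"
    unfolding prob_more_than_def sum_distrib_left by (subst sum.swap) (intro sum.cong; simp)
  also have "\<dots> = running_mass k"
    unfolding level_sum_def mass_def
    by (intro sum.cong) (auto simp: prior_times_prob_hist cong: if_cong)
  finally show ?thesis .
qed

lemma expected_queries_eq:
  "(\<Sum>v\<in>{1..n}. ennreal (\<mu> v) * expected_queries p S v) = (\<Sum>k. ennreal (running_mass k))"
  unfolding expected_queries_def prior_weighted_prob_more_than[symmetric]
  using \<mu>_nonneg prob_hist_strategy_nonneg
  by (intro sum_ennreal_mult_suminf) (auto simp: prob_more_than_def intro: sum_nonneg)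

lemma expected_queries_le:
  assumes "entropy n \<mu> + log 2 stop_odds \<le> B"
  shows "(\<Sum>v\<in>{1..n}. ennreal (\<mu> v) * expected_queries p S v) \<le> ennreal (B / capacity p)"
proof (cases "asks []")
  case True
  have cap: "0 < capacity p" by (rule capacity_pos[OF p_pos p_less_half])
  have "suminf running_mass \<le> (log 2 stop_odds - potential n \<mu>) / capacity p"
    using running_mass_sum_le[OF True] cap
    by (intro suminf_le_const summable_running_mass) (simp add: pos_le_divide_eq mult.commute)
  also have "\<dots> \<le> B / capacity p"
    using neg_potential_le_entropy[OF \<mu>_nonneg mass_prior] assms cap by (intro divide_right_mono) auto
  finally show ?thesis
    unfolding expected_queries_eq
    using running_mass_nonneg summable_running_mass by (simp add: suminf_ennreal2 ennreal_leI)
next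
  case False
  then show ?thesis unfolding expected_queries_eq by (simp add: level_sum_root_stops)
qed

lemma stopped_mass_le_answer_prob:
  "(1 - \<delta>) * stopped_mass k
     \<le> (\<Sum>v\<in>{1..n}. \<mu> v * (\<Sum>h | length h = k. if S h = Answer v then prob_hist p S v h else 0))"
proof -
  have "(1 - \<delta>) * stopped_mass k
        \<le> (\<Sum>h | length h = k. \<Sum>v\<in>{1..n}. if S h = Answer v \<and> reachable S h then post h v else 0)"
    unfolding level_sum_cmult unfolding level_sum_def
  proof (intro sum_mono)
    fix h
    show "(if reachable S h \<and> \<not> asks h then (1 - \<delta>) * W h else 0)
          \<le> (\<Sum>v\<in>{1..n}. if S h = Answer v \<and> reachable S h then post h v else 0)"
    proof (cases "reachable S h \<and> \<not> asks h")
      case True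
      then obtain x where "x \<in> {1..n}" "S h = Answer x" "(1 - \<delta>) * W h \<le> post h x"
        using strategy_answer by blast
      with True show ?thesis by (simp add: sum.delta)
    qed (use posterior_nonneg in \<open>auto intro: sum_nonneg\<close>)
  qed
  also have "\<dots> = (\<Sum>h | length h = k. \<Sum>v\<in>{1..n}. \<mu> v * (if S h = Answer v then prob_hist p S v h else 0))"
  proof -
    have "\<mu> v * (if S h = Answer v then prob_hist p S v h else 0)
          = (if S h = Answer v \<and> reachable S h then post h v else 0)" for v h
      using prior_times_prob_hist[of v h] by (metis mult_zero_right)
    then show ?thesis by simp
  qed
  also have "\<dots> = (\<Sum>v\<in>{1..n}. \<mu> v * (\<Sum>h | length h = k. if S h = Answer v then prob_hist p S v h else 0))"
    unfolding sum_distrib_left by (rule sum.swap)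
  finally show ?thesis .
qed

lemma success_prob_ge:
  "ennreal (1 - \<delta>) \<le> (\<Sum>v\<in>{1..n}. ennreal (\<mu> v) * success_prob p S v)"
proof -
  have "(\<lambda>k. (1 - \<delta>) * stopped_mass k) sums (1 - \<delta>)"
    using sums_mult[OF stopped_mass_sums, of "1 - \<delta>"] by simp
  then have "ennreal (1 - \<delta>) = (\<Sum>k. ennreal ((1 - \<delta>) * stopped_mass k))"
    using stopped_mass_nonneg \<delta>_less_half by (intro suminf_ennreal_eq[symmetric]) auto
  also have "\<dots> \<le> (\<Sum>k. ennreal (\<Sum>v\<in>{1..n}. \<mu> v *
      (\<Sum>h | length h = k. if S h = Answer v then prob_hist p S v h else 0)))"
    by (intro suminf_le summableI ennreal_leI stopped_mass_le_answer_prob)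
  also have "\<dots> = (\<Sum>v\<in>{1..n}. ennreal (\<mu> v) * success_prob p S v)"
    unfolding success_prob_def using \<mu>_nonneg prob_hist_strategy_nonneg
    by (intro sum_ennreal_mult_suminf[symmetric]) (auto intro: sum_nonneg)
  finally show ?thesis .
qed

end

theorem theorem5:
  fixes p :: real
  assumes "0 < p" and "p < 1/2"
  shows "\<exists>C>0. \<forall>\<delta>::real. 0 < \<delta> \<and> \<delta> < 1/2 \<longrightarrow>
     (\<exists>A :: nat \<Rightarrow> (nat \<Rightarrow> real) \<Rightarrow> bool list \<Rightarrow> action.
       \<forall>n \<mu>. n \<ge> 1 \<and> (\<forall>x\<in>{1..n}. \<mu> x \<ge> 0) \<and> (\<Sum>x\<in>{1..n}. \<mu> x) = 1 \<longrightarrow>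
         (\<forall>h q. A n \<mu> h = Ask q \<longrightarrow> q \<in> {1..n}) \<and>
         (\<Sum>v\<in>{1..n}. ennreal (\<mu> v) * expected_queries p (A n \<mu>) v)
            \<le> ennreal ((entropy n \<mu> + C * \<bar>entropy2 n \<mu>\<bar> + C * log 2 (1 / \<delta>)) / capacity p) \<and>
         (\<Sum>v\<in>{1..n}. ennreal (\<mu> v) * success_prob p (A n \<mu>) v) \<ge> ennreal (1 - \<delta>))"
proof -
  define C where "C = 1 + log 2 ((1 - p) / p)"
  have "0 \<le> log 2 ((1 - p) / p)" using assms by (simp add: field_simps)
  then have "0 < C" by (simp add: C_def)
  moreover have "(\<forall>h q. noisy_search p \<delta> n \<mu> h = Ask q \<longrightarrow> q \<in> {1..n}) \<and>
      (\<Sum>v\<in>{1..n}. ennreal (\<mu> v) * expected_queries p (noisy_search p \<delta> n \<mu>) v)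
        \<le> ennreal ((entropy n \<mu> + C * \<bar>entropy2 n \<mu>\<bar> + C * log 2 (1 / \<delta>)) / capacity p) \<and>
      (\<Sum>v\<in>{1..n}. ennreal (\<mu> v) * success_prob p (noisy_search p \<delta> n \<mu>) v) \<ge> ennreal (1 - \<delta>)"
    if \<delta>: "0 < \<delta> \<and> \<delta> < 1/2" and \<mu>: "(\<forall>x\<in>{1..n}. \<mu> x \<ge> 0) \<and> (\<Sum>x\<in>{1..n}. \<mu> x) = 1"
    for \<delta> n \<mu>
  proof -
    interpret noisy_search_instance p \<delta> n \<mu> using assms \<delta> \<mu> by unfold_locales auto
    have "log 2 stop_odds \<le> C * log 2 (1 / \<delta>)"
      unfolding stop_odds_def C_def using log_stop_odds_le[OF assms] \<delta> by blast
    moreover have "0 \<le> C * \<bar>entropy2 n \<mu>\<bar>" using \<open>0 < C\<close> by simp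
    ultimately have "entropy n \<mu> + log 2 stop_odds
        \<le> entropy n \<mu> + C * \<bar>entropy2 n \<mu>\<bar> + C * log 2 (1 / \<delta>)"
      by linarith
    then show ?thesis
      using strategy_query_in_range expected_queries_le success_prob_ge by blast
  qed
  ultimately show ?thesis by blast
qed

end
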